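(* Let $\mathit{Winner}$ be a unary predicate symbol in $\Phi$, and let $\mathit{Lottery}$ be the sentence $\forall x(\mathit{true}\hookrightarrow\neg\mathit{Winner}(x))\land(\mathit{true}\hookrightarrow\exists x\,\mathit{Winner}(x))$ and $\mathit{Crooked}$ the sentence $\exists y\forall x\,(x\ne y\Rightarrow((\mathit{Winner}(x)\lor\mathit{Winner}(y))\hookrightarrow\mathit{Winner}(y)))$. Let $PL=(\mathit{Dom},W,\mathrm{Pl},\pi)$ be a subjective plausibility structure whose plausibility measure is defined on all subsets of $W$, is qualitative (satisfies A2 and A3), and satisfies A2$^\dagger$ and A3$^*$. Then $\mathit{Lottery}\land\mathit{Crooked}\Rightarrow(\mathit{true}\hookrightarrow\mathit{false})$ holds at every world of $PL$.
   Context: The language $\mathcal{L}^{subj}(\Phi)$ over a first-order vocabulary $\Phi$ is the least set containing the atomic first-order formulas (including equalities) and closed under $\neg,\land,\lor,\Rightarrow$, $\forall x$, $\exists x$, and a binary conditional connective $\hookrightarrow$. $\mathit{true},\mathit{false}$ are a fixed tautology and its negation. A plausibility measure on $W$ is $\mathrm{Pl}:2^W\to D$, $(D,\le)$ a partial order with least element $\bot$ and greatest $\top$, $\mathrm{Pl}(W)=\top$, $\mathrm{Pl}(\emptyset)=\bot$, and $A\subseteq B\Rightarrow\mathrm{Pl}(A)\le\mathrm{Pl}(B)$; $d<d'$ means $d\le d'$ and $d\ne d'$. A subjective plausibility structure is $(\mathit{Dom},W,\mathrm{Pl},\pi)$ with $\mathit{Dom}$ a nonempty set and $\pi(w)$ an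 interpretation of $\Phi$ over $\mathit{Dom}$ for each $w\in W$. Valuations map variables to $\mathit{Dom}$; $v\sim_x v'$ means they agree except possibly on $x$. Satisfaction at $(w,v)$ is as in first-order logic in $(\mathit{Dom},\pi(w))$ for atomic formulas and Boolean connectives; $\forall x\phi$ holds at $(w,v)$ iff $\phi$ holds at $(w,v')$ for all $v'\sim_x v$; $\phi\hookrightarrow\psi$ holds at $(w,v)$ iff $\mathrm{Pl}([\![\phi]\!]_v)=\bot$ or $\mathrm{Pl}([\![\phi\land\psi]\!]_v)>\mathrm{Pl}([\![\phi\land\neg\psi]\!]_v)$, where $[\![\phi]\!]_v=\{w\in W:\phi\text{ holds at }(w,v)\}$. A2: for pairwise disjoint $A,B,C$, if $\mathrm{Pl}(A\cup B)>\mathrm{Pl}(C)$ and $\mathrm{Pl}(A\cup C)>\mathrm{Pl}(B)$ then $\mathrm{Pl}(A)>\mathrm{Pl}(B\cup C)$. A3: $\mathrm{Pl}(A)=\mathrm{Pl}(B)=\bot$ implies $\mathrm{Pl}(A\cup B)=\bot$. A2$^\dagger$: whenever $\{A_i:i\in I\}$ are pairwise disjoint subsets of $W$ with $0\in I$, $A=\bigcup_{i\in I}A_i$, and $\mathrm{Pl}(A_0)>\mathrm{Pl}(A_i)$ for all $i\in I\setminus\{0\}$, then not $\mathrm{Pl}(A_0)<\mathrm{Pl}(A\setminus A_0)$. A3$^*$: for every family $\{A_i:i\in I\}$ of subsets of $W$ with $\mathrm{Pl}(A_i)=\bot$ for all $i$, $\mathrm{Pl}(\bigcup_iA_i)=\bot$.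 *)

theory Defs
  imports Main
begin

text \<open>Vocabulary Phi: function symbols of type 'f, predicate symbols of type 'p
 (arities are not tracked; symbols are applied to argument lists).
 Variables are natural numbers.\<close>

datatype 'f trm = Var nat | Fn 'f "'f trm list"

datatype ('f, 'p) fm =
    Atom 'p "'f trm list"
  | Eq "'f trm" "'f trm"
  | Neg "('f, 'p) fm"
  | Conj "('f, 'p) fm" "('f, 'p) fm"
  | Disj "('f, 'p) fm" "('f, 'p) fm"
  | Imp "('f, 'p) fm" "('f, 'p) fm"
  | All nat "('f, 'p) fm"
  | Ex nat "('f, 'p) fm"
  | Cond "('f, 'p) fm" "('f, 'p) fm"

definition fTrue :: "('f, 'p) fm" where "fTrue = Eq (Var 0) (Var 0)"
definition fFalse :: "('f, 'p) fm" where "fFalse = Neg fTrue"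

text \<open>A subjective plausibility structure (Dom, W, Pl, pi) is represented with
 Dom = UNIV :: 'd set, W = UNIV :: 'w set, Pl :: 'w set => 'v, and pi given by
 its function part FI and predicate part PI (both depending on the world).\<close>

fun eval_trm :: "('w \<Rightarrow> 'f \<Rightarrow> 'd list \<Rightarrow> 'd) \<Rightarrow> 'w \<Rightarrow> (nat \<Rightarrow> 'd) \<Rightarrow> 'f trm \<Rightarrow> 'd" where
  "eval_trm FI w v (Var x) = v x"
| "eval_trm FI w v (Fn f ts) = FI w f (map (eval_trm FI w v) ts)"

fun holds :: "('w set \<Rightarrow> 'v::{order_bot,order_top}) \<Rightarrow> ('w \<Rightarrow> 'f \<Rightarrow> 'd list \<Rightarrow> 'd) \<Rightarrow> ('w \<Rightarrow> 'p \<Rightarrow> 'd list \<Rightarrow> bool)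
              \<Rightarrow> 'w \<Rightarrow> (nat \<Rightarrow> 'd) \<Rightarrow> ('f, 'p) fm \<Rightarrow> bool" where
  "holds Pl FI PI w v (Atom P ts) = PI w P (map (eval_trm FI w v) ts)"
| "holds Pl FI PI w v (Eq s t) = (eval_trm FI w v s = eval_trm FI w v t)"
| "holds Pl FI PI w v (Neg \<phi>) = (\<not> holds Pl FI PI w v \<phi>)"
| "holds Pl FI PI w v (Conj \<phi> \<psi>) = (holds Pl FI PI w v \<phi> \<and> holds Pl FI PI w v \<psi>)"
| "holds Pl FI PI w v (Disj \<phi> \<psi>) = (holds Pl FI PI w v \<phi> \<or> holds Pl FI PI w v \<psi>)"
| "holds Pl FI PI w v (Imp \<phi> \<psi>) = (holds Pl FI PI w v \<phi> \<longrightarrow> holds Pl FI PI w v \<psi>)"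
| "holds Pl FI PI w v (All x \<phi>) = (\<forall>d. holds Pl FI PI w (v(x := d)) \<phi>)"
| "holds Pl FI PI w v (Ex x \<phi>) = (\<exists>d. holds Pl FI PI w (v(x := d)) \<phi>)"
| "holds Pl FI PI w v (Cond \<phi> \<psi>) =
     (Pl {u. holds Pl FI PI u v \<phi>} = bot
      \<or> Pl {u. holds Pl FI PI u v \<phi> \<and> holds Pl FI PI u v \<psi>}
          > Pl {u. holds Pl FI PI u v \<phi> \<and> \<not> holds Pl FI PI u v \<psi>})"

definition plausibility_measure :: "('w set \<Rightarrow> 'v::{order_bot,order_top}) \<Rightarrow> bool" where
  "plausibility_measure Pl \<longleftrightarrow> Pl UNIV = top \<and> Pl {} = bot \<and> (\<forall>A B. A \<subseteq> B \<longrightarrow> Pl A \<le> Pl B)"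

definition A2 :: "('w set \<Rightarrow> 'v::order) \<Rightarrow> bool" where
  "A2 Pl \<longleftrightarrow> (\<forall>A B C. A \<inter> B = {} \<and> A \<inter> C = {} \<and> B \<inter> C = {} \<longrightarrow>
      Pl (A \<union> B) > Pl C \<longrightarrow> Pl (A \<union> C) > Pl B \<longrightarrow> Pl A > Pl (B \<union> C))"

definition A3 :: "('w set \<Rightarrow> 'v::order_bot) \<Rightarrow> bool" where
  "A3 Pl \<longleftrightarrow> (\<forall>A B. Pl A = bot \<longrightarrow> Pl B = bot \<longrightarrow> Pl (A \<union> B) = bot)"

definition qualitative :: "('w set \<Rightarrow> 'v::order_bot) \<Rightarrow> bool" where
  "qualitative Pl \<longleftrightarrow> A2 Pl \<and> A3 Pl"

text \<open>A2-dagger, for families indexed by a set I of indices of type 'w set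
 (any family of pairwise disjoint subsets of W can be so reindexed, e.g. by i -> A i,
 without changing the hypotheses or the conclusion).\<close>
definition A2dagger :: "('w set \<Rightarrow> 'v::order) \<Rightarrow> bool" where
  "A2dagger Pl \<longleftrightarrow> (\<forall>(I :: 'w set set) (A :: 'w set \<Rightarrow> 'w set) i0.
      i0 \<in> I \<longrightarrow> (\<forall>i\<in>I. \<forall>j\<in>I. i \<noteq> j \<longrightarrow> A i \<inter> A j = {}) \<longrightarrow>
      (\<forall>i\<in>I - {i0}. Pl (A i0) > Pl (A i)) \<longrightarrow>
      \<not> (Pl (A i0) < Pl ((\<Union>i\<in>I. A i) - A i0)))"

text \<open>A3-star, for arbitrary families of subsets of W (indexed by themselves).\<close>
definition A3star :: "('w set \<Rightarrow> 'v::order_bot) \<Rightarrow> bool" where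
  "A3star Pl \<longleftrightarrow> (\<forall>F :: 'w set set. (\<forall>A\<in>F. Pl A = bot) \<longrightarrow> Pl (\<Union>F) = bot)"

section \<open>The sentences Lottery and Crooked (x = variable 0, y = variable 1)\<close>

definition Lottery :: "'p \<Rightarrow> ('f, 'p) fm" where
  "Lottery Winner = Conj (All 0 (Cond fTrue (Neg (Atom Winner [Var 0]))))
                         (Cond fTrue (Ex 0 (Atom Winner [Var 0])))"

definition Crooked :: "'p \<Rightarrow> ('f, 'p) fm" where
  "Crooked Winner = Ex 1 (All 0 (Imp (Neg (Eq (Var 0) (Var 1)))
      (Cond (Disj (Atom Winner [Var 0]) (Atom Winner [Var 1])) (Atom Winner [Var 1]))))"

end

theory Submission
  imports Defs
begin

(* Suppose Lottery and Crooked hold and Pl W is not bot. Let W_d be the worlds where d wins,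
   E their union, and c the witness of Crooked.
   If Pl W_c = bot, Crooked forces Pl W_d = bot for every d, so Pl E = bot by A3star,
   contradicting the second conjunct of Lottery.
   Otherwise every W_d - W_c is strictly less plausible than W_c; disjointifying these sets,
   A2dagger gives that W_c is not less plausible than E - W_c. But A2 applied to the
   partition E - W_c, W_c, -E, together with Lottery, makes W_c less plausible than E - W_c. *)

lemma plausibility_measure_mono: "plausibility_measure Pl \<Longrightarrow> mono Pl"
  unfolding plausibility_measure_def by (simp add: monoI)

lemma A2daggerD:
  assumes "A2dagger Pl" "A \<in> J"
    and "\<forall>X\<in>J. \<forall>Y\<in>J. X \<noteq> Y \<longrightarrow> X \<inter> Y = {}"
    and "\<forall>X\<in>J - {A}. Pl X < Pl A"
  shows "\<not> Pl A < Pl (\<Union>J - A)"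
  using assms(1)[unfolded A2dagger_def, rule_format, of A J "\<lambda>X. X"] assms(2-) by simp

lemma A2dagger_not_less_UNION_diff:
  fixes Pl :: "'w set \<Rightarrow> 'v::order" and S :: "'i \<Rightarrow> 'w set"
  assumes "mono Pl" "A2dagger Pl"
    and less: "\<And>i. i \<in> I \<Longrightarrow> Pl (S i - A) < Pl A"
  shows "\<not> Pl A < Pl ((\<Union>i\<in>I. S i) - A)"
proof -
  define pick where "pick u = (SOME i. i \<in> I \<and> u \<in> S i)" for u
  have pick: "pick u \<in> I \<and> u \<in> S (pick u)" if "u \<in> (\<Union>i\<in>I. S i)" for u
    using someI_ex[of "\<lambda>i. i \<in> I \<and> u \<in> S i"] that unfolding pick_def by blast
  \<comment> \<open>Disjointify by assigning each point to one chosen set containing it.\<close>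
  define P where "P i = {u \<in> (\<Union>i\<in>I. S i) - A. pick u = i}" for i
  have P_sub: "P i \<subseteq> S i - A" for i
    using pick unfolding P_def by blast
  have P_disjoint: "P i \<inter> P j = {}" if "i \<noteq> j" for i j
    using that unfolding P_def by blast
  have P_disjoint_A: "P i \<inter> A = {}" for i
    using P_sub by blast
  have P_Union: "(\<Union>i\<in>I. P i) = (\<Union>i\<in>I. S i) - A"
    using pick unfolding P_def by blast
  let ?J = "insert A (P ` I)"
  have J_disjoint: "\<forall>X\<in>?J. \<forall>Y\<in>?J. X \<noteq> Y \<longrightarrow> X \<inter> Y = {}"
    using P_disjoint P_disjoint_A by (metis Int_commute image_iff insert_iff)
  have P_less: "Pl (P i) < Pl A" if "i \<in> I" for i
    using monoD[OF \<open>mono Pl\<close> P_sub] less[OF that] by (rule order.strict_trans1)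
  then have J_less: "\<forall>X\<in>?J - {A}. Pl X < Pl A"
    by auto
  have "\<not> Pl A < Pl (\<Union>?J - A)"
    using A2daggerD[OF \<open>A2dagger Pl\<close> insertI1 J_disjoint J_less] .
  moreover have "\<Union>?J - A = (\<Union>i\<in>I. S i) - A"
    using P_Union P_disjoint_A by auto
  ultimately show ?thesis by simp
qed

lemma A2_less_diff:
  fixes Pl :: "'w set \<Rightarrow> 'v::order"
  assumes "mono Pl" "A2 Pl" "B \<subseteq> E"
    and "Pl (- E) < Pl E" "Pl B < Pl (- B)"
  shows "Pl B < Pl (E - B)"
proof -
  have "(E - B) \<union> B = E" "(E - B) \<union> - E = - B"
    using \<open>B \<subseteq> E\<close> by auto
  with assms(4,5) have "Pl (- E) < Pl ((E - B) \<union> B)" "Pl B < Pl ((E - B) \<union> - E)"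
    by simp_all
  then have "Pl (B \<union> - E) < Pl (E - B)"
    using \<open>A2 Pl\<close>[unfolded A2_def, rule_format, of "E - B" B "- E"] \<open>B \<subseteq> E\<close> by blast
  moreover have "Pl B \<le> Pl (B \<union> - E)"
    using \<open>mono Pl\<close> by (simp add: monoD)
  ultimately show ?thesis by simp
qed

lemma lottery_crooked_contradiction:
  fixes Pl :: "'w set \<Rightarrow> 'v::order_bot" and W :: "'d \<Rightarrow> 'w set"
  assumes "mono Pl" "A2 Pl" "A2dagger Pl" "A3star Pl"
    and single_unlikely: "\<And>d. Pl (W d) < Pl (- W d)"
    and some_likely: "Pl (- (\<Union>d. W d)) < Pl (\<Union>d. W d)"
    and crooked: "\<And>d. d \<noteq> c \<Longrightarrow> Pl (W d \<union> W c) = bot \<or> Pl (W d - W c) < Pl (W c)"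
  shows False
proof (cases "Pl (W c) = bot")
  case True
  have "Pl (W d) = bot" for d
  proof (cases "d = c")
    case False
    with crooked True have "Pl (W d \<union> W c) = bot" by auto
    then show ?thesis
      using monoD[OF \<open>mono Pl\<close>, of "W d" "W d \<union> W c"] by (simp add: bot_unique)
  qed (use True in simp)
  then have "Pl (\<Union>d. W d) = bot"
    using \<open>A3star Pl\<close> unfolding A3star_def by blast
  with some_likely show False by simp
next
  case False
  have "Pl (W d - W c) < Pl (W c)" if "d \<in> - {c}" for d
  proof -
    have "Pl (W d - W c) \<le> Pl (W d \<union> W c)"
      using \<open>mono Pl\<close> by (rule monoD) blast
    then show ?thesis
      using crooked[of d] that False by (auto simp: bot_unique bot_less)
  qed
  then have "\<not> Pl (W c) < Pl ((\<Union>d\<in>- {c}. W d) - W c)"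
    by (rule A2dagger_not_less_UNION_diff[OF \<open>mono Pl\<close> \<open>A2dagger Pl\<close>])
  moreover have "(\<Union>d\<in>- {c}. W d) - W c = (\<Union>d. W d) - W c"
    by auto
  moreover have "Pl (W c) < Pl ((\<Union>d. W d) - W c)"
    using A2_less_diff[OF \<open>mono Pl\<close> \<open>A2 Pl\<close> _ some_likely single_unlikely] by blast
  ultimately show False by simp
qed

definition atom_worlds :: "('w \<Rightarrow> 'p \<Rightarrow> 'd list \<Rightarrow> bool) \<Rightarrow> 'p \<Rightarrow> 'd \<Rightarrow> 'w set" where
  "atom_worlds PI P d = {w. PI w P [d]}"

lemma holds_fTrue [simp]: "holds Pl FI PI w v fTrue"
  by (simp add: fTrue_def)

lemma holds_Lottery:
  assumes "Pl UNIV \<noteq> bot"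
  shows "holds Pl FI PI w v (Lottery Winner) \<longleftrightarrow>
     (\<forall>d. Pl (atom_worlds PI Winner d) < Pl (- atom_worlds PI Winner d)) \<and>
     Pl (- (\<Union>d. atom_worlds PI Winner d)) < Pl (\<Union>d. atom_worlds PI Winner d)"
  using assms by (simp add: Lottery_def atom_worlds_def Collect_neg_eq[symmetric] UNION_eq)

lemma holds_Crooked:
  "holds Pl FI PI w v (Crooked Winner) \<longleftrightarrow>
     (\<exists>c. \<forall>d. d \<noteq> c \<longrightarrow>
        Pl (atom_worlds PI Winner d \<union> atom_worlds PI Winner c) = bot
        \<or> Pl (atom_worlds PI Winner d - atom_worlds PI Winner c) < Pl (atom_worlds PI Winner c))"
proof -
  have "{u. (PI u Winner [d] \<or> PI u Winner [c]) \<and> PI u Winner [c]} = atom_worlds PI Winner c"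
    "{u. (PI u Winner [d] \<or> PI u Winner [c]) \<and> \<not> PI u Winner [c]}
       = atom_worlds PI Winner d - atom_worlds PI Winner c"
    "{u. PI u Winner [d] \<or> PI u Winner [c]} = atom_worlds PI Winner d \<union> atom_worlds PI Winner c"
    for c d
    unfolding atom_worlds_def by auto
  then show ?thesis
    by (simp add: Crooked_def)
qed

theorem proposition5p8:
  fixes Pl :: "'w set \<Rightarrow> 'v::{order_bot,order_top}"
    and FI :: "'w \<Rightarrow> 'f \<Rightarrow> 'd list \<Rightarrow> 'd"
    and PI :: "'w \<Rightarrow> 'p \<Rightarrow> 'd list \<Rightarrow> bool"
    and Winner :: 'p
  assumes "plausibility_measure Pl"
    and "qualitative Pl"
    and "A2dagger Pl"
    and "A3star Pl"
  shows "\<forall>w v. holds Pl FI PI w v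
           (Imp (Conj (Lottery Winner) (Crooked Winner)) (Cond fTrue fFalse))"
proof (intro allI)
  fix w v
  show "holds Pl FI PI w v (Imp (Conj (Lottery Winner) (Crooked Winner)) (Cond fTrue fFalse))"
  proof (cases "Pl UNIV = bot")
    case True
    then show ?thesis by simp
  next
    case False
    have "\<not> (holds Pl FI PI w v (Lottery Winner) \<and> holds Pl FI PI w v (Crooked Winner))"
      using lottery_crooked_contradiction[OF plausibility_measure_mono[OF assms(1)] _ assms(3,4),
          of "atom_worlds PI Winner"] assms(2)
      unfolding holds_Lottery[of Pl, OF False] holds_Crooked qualitative_def by blast
    then show ?thesis by (simp only: holds.simps) blast
  qed
qed

end
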